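(* Let $A\ge 3$, $N\ge 2$, and let $w:\mathbf{Prof}\to\mathbf{Pref}$ be a social welfare function satisfying IIA with pairwise comparison functions $s_1,\dots,s_A:\{0,e,1\}^N\to\{0,e,1\}$, and satisfying Unanimity and Unrestricted Domain. Then: (1) for every $j\in\{1,\dots,A\}$ and every $x\in\{0,1\}^N$, $s_j(\neg x)=\neg s_j(x)$; (2) for every $x\in\{0,1\}^N$, $s_1(x)=s_2(x)=\dots=s_A(x)$.
   Context: Let $\mathcal{A}=\{a_1,\dots,a_A\}$ and $N\ge 2$ individuals; $e$ is a third symbol distinct from $0,1$. Let $\sigma(i)=i+1$ for $i<A$, $\sigma(A)=1$. A preference relation is $t\in\{0,e,1\}^A$, where $t_i$ records $a_i$ versus $a_{\sigma(i)}$: $0$ means $a_i\prec a_{\sigma(i)}$, $1$ means $a_{\sigma(i)}\prec a_i$, $e$ means $a_i\sim a_{\sigma(i)}$. It corresponds to a weak order if some complete transitive relation on $\mathcal{A}$ realizes all these comparisons; otherwise it is a preference cycle. $\mathbf{Pref}=\{0,e,1\}^A$. A profile is an $A\times N$ matrix over $\{0,e,1\}$ whose every column corresponds to a weak order; $\mathbf{Prof}$ is the set of profiles, written in row form $(r_1,\dots,r_A)$ with $r_j\in\{0,e,1\}^N$. A social welfare function is a map $w:\mathbf{Prof}\to\mathbf{Pref}$. It satisfies IIA if there are functions $s_1,\dots,s_A:\{0,e,1\}^N\to\{0,e,1\}$ (pairwise comparison functions) with $w(r_1,\dots,r_A)=(s_1(r_1),\dots,s_A(r_A))$ for every profile. Unanimity: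 $s_j(\Delta x)=x$ for all $j$ and $x\in\{0,1\}$, where $\Delta x=(x,\dots,x)$. Unrestricted Domain: $w(m)$ corresponds to a weak order for every profile $m$. Negation $\neg$ maps $0\mapsto1$, $1\mapsto0$, $e\mapsto e$, acting entrywise on tuples. *)

theory Defs
  imports Main
begin

datatype sym = S0 | Se | S1

fun neg :: "sym \<Rightarrow> sym" where
  "neg S0 = S1" | "neg S1 = S0" | "neg Se = Se"

text \<open>Alternatives a_1..a_A are indexed 0..A-1; sigma is the cyclic successor.\<close>
definition sigma :: "nat \<Rightarrow> nat \<Rightarrow> nat" where
  "sigma A i = Suc i mod A"

text \<open>R x y means a_x \<preceq> a_y (weakly). A symbol c records the comparison of a_i vs a_{sigma i}.\<close>
definition realizes :: "(nat \<Rightarrow> nat \<Rightarrow> bool) \<Rightarrow> sym \<Rightarrow> nat \<Rightarrow> nat \<Rightarrow> bool" where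
  "realizes R c i j = (case c of
      S0 \<Rightarrow> R i j \<and> \<not> R j i
    | S1 \<Rightarrow> R j i \<and> \<not> R i j
    | Se \<Rightarrow> R i j \<and> R j i)"

definition weak_order :: "nat \<Rightarrow> sym list \<Rightarrow> bool" where
  "weak_order A t \<longleftrightarrow> length t = A \<and>
     (\<exists>R. (\<forall>x<A. \<forall>y<A. R x y \<or> R y x)
        \<and> (\<forall>x<A. \<forall>y<A. \<forall>z<A. R x y \<longrightarrow> R y z \<longrightarrow> R x z)
        \<and> (\<forall>i<A. realizes R (t ! i) i (sigma A i)))"

definition column :: "nat \<Rightarrow> sym list list \<Rightarrow> nat \<Rightarrow> sym list" where
  "column A m k = map (\<lambda>j. m ! j ! k) [0..<A]"

definition is_profile :: "nat \<Rightarrow> nat \<Rightarrow> sym list list \<Rightarrow> bool" where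
  "is_profile A N m \<longleftrightarrow> length m = A \<and> (\<forall>j<A. length (m ! j) = N)
      \<and> (\<forall>k<N. weak_order A (column A m k))"

end

theory Submission
  imports Defs
begin

(* Fix distinct indices p, q, a binary row x and c \<in> {0, 1}, and consider the profile with
   row p equal to x, row q equal to \<not>x and all other rows constantly c. Every column is constant c
   except for one reversed comparison, which is realised by a weak order. By unanimity the social
   preference records c at a third index; since weak ascents all the way around the cycle
   a_1, ..., a_A force total indifference, a strict c must be balanced by some entry \<not>c, which can
   only sit at p or q. Taking both values of c gives s_q(\<not>x) = \<not>s_p(x) whenever p \<noteq> q, and
   comparing any two indices with a third one yields both claims. *)

lemma neg_neg [simp]: "neg (neg c) = c"
  by (cases c) auto

lemma realizes_converse: "realizes (\<lambda>x y. R y x) c i j = realizes R (neg c) i j"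
  by (cases c) (auto simp: realizes_def)

lemma sigma_eq: "i < A \<Longrightarrow> sigma A i = (if Suc i = A then 0 else Suc i)"
  by (simp add: sigma_def)

lemma weak_order_map_neg:
  assumes "weak_order A t"
  shows "weak_order A (map neg t)"
proof -
  from assms obtain R where length: "length t = A"
    and total: "\<forall>x<A. \<forall>y<A. R x y \<or> R y x"
    and transitive: "\<forall>x<A. \<forall>y<A. \<forall>z<A. R x y \<longrightarrow> R y z \<longrightarrow> R x z"
    and realized: "\<forall>i<A. realizes R (t ! i) i (sigma A i)"
    unfolding weak_order_def by blast
  have "\<forall>x<A. \<forall>y<A. R y x \<or> R x y" using total by blast
  moreover have "\<forall>x<A. \<forall>y<A. \<forall>z<A. R y x \<longrightarrow> R z y \<longrightarrow> R z x" using transitive by blast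
  moreover have "\<forall>i<A. realizes (\<lambda>x y. R y x) (map neg t ! i) i (sigma A i)"
    using realized length by (simp add: realizes_converse[of R])
  ultimately have "\<exists>R. (\<forall>x<A. \<forall>y<A. R x y \<or> R y x)
        \<and> (\<forall>x<A. \<forall>y<A. \<forall>z<A. R x y \<longrightarrow> R y z \<longrightarrow> R x z)
        \<and> (\<forall>i<A. realizes R (map neg t ! i) i (sigma A i))"
    by (intro exI[of _ "\<lambda>x y. R y x"] conjI)
  then show ?thesis using length by (simp add: weak_order_def)
qed

lemma cycle_relates_all:
  assumes total: "\<forall>x<A. \<forall>y<A. R x y \<or> R y x"
    and transitive: "\<forall>x<A. \<forall>y<A. \<forall>z<A. R x y \<longrightarrow> R y z \<longrightarrow> R x z"
    and step: "\<forall>i<A. R i (sigma A i)"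
    and "a < A" "b < A"
  shows "R a b"
proof -
  have chain: "R i j" if "i \<le> j" "j < A" for i j
    using that
  proof (induction j)
    case 0
    then show ?case using total by auto
  next
    case (Suc j)
    show ?case
    proof (cases "i = Suc j")
      case True
      then show ?thesis using total Suc.prems by auto
    next
      case False
      then have "R i j" using Suc by simp
      moreover have "R j (Suc j)" using step[rule_format, of j] sigma_eq[of j A] Suc.prems by simp
      ultimately show ?thesis using transitive[rule_format, of i j "Suc j"] Suc.prems by simp
    qed
  qed
  have "R (A - 1) 0" using step[rule_format, of "A - 1"] sigma_eq[of "A - 1" A] \<open>a < A\<close> by simp
  then have "R a 0" using chain[of a "A - 1"] transitive[rule_format, of a "A - 1" 0] \<open>a < A\<close> by simp
  then show "R a b" using chain[of 0 b] transitive[rule_format, of a 0 b] \<open>a < A\<close> \<open>b < A\<close> by simp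
qed

lemma weak_order_S0_imp_S1:
  assumes "weak_order A t" "i < A" "t ! i = S0"
  shows "\<exists>j<A. t ! j = S1"
proof (rule ccontr)
  assume no_S1: "\<not> (\<exists>j<A. t ! j = S1)"
  from assms(1) obtain R where total: "\<forall>x<A. \<forall>y<A. R x y \<or> R y x"
    and transitive: "\<forall>x<A. \<forall>y<A. \<forall>z<A. R x y \<longrightarrow> R y z \<longrightarrow> R x z"
    and realized: "\<forall>i<A. realizes R (t ! i) i (sigma A i)"
    unfolding weak_order_def by blast
  have "\<forall>j<A. R j (sigma A j)"
  proof (intro allI impI)
    fix j assume "j < A"
    then show "R j (sigma A j)" using realized no_S1
      by (cases "t ! j") (auto simp: realizes_def)
  qed
  moreover have "sigma A i < A" using \<open>i < A\<close> by (simp add: sigma_def)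
  ultimately have "R (sigma A i) i" using cycle_relates_all[OF total transitive] \<open>i < A\<close> by blast
  then show False using realized[rule_format, OF \<open>i < A\<close>] \<open>t ! i = S0\<close> by (simp add: realizes_def)
qed

lemma weak_order_opposite_exists:
  assumes "weak_order A t" "i < A" "t ! i = c" "c \<in> {S0, S1}"
  shows "\<exists>j<A. t ! j = neg c"
proof (cases c)
  case S0
  then show ?thesis using weak_order_S0_imp_S1 assms by auto
next
  case S1
  have "length t = A" using assms(1) by (simp add: weak_order_def)
  then have "map neg t ! i = S0" using assms(2,3) S1 by simp
  then obtain j where "j < A" "map neg t ! j = S1"
    using weak_order_S0_imp_S1 weak_order_map_neg assms by blast
  then show ?thesis using S1 \<open>length t = A\<close> by (metis neg.simps(1) neg_neg nth_map)
next
  case Se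
  then show ?thesis using assms(4) by simp
qed

lemma weak_order_single_descent:
  assumes "r < A" "2 \<le> A"
  shows "weak_order A (map (\<lambda>i. if i = r then S1 else S0) [0..<A])"
proof -
  \<comment> \<open>position of a_i when the alternatives are listed cyclically starting at a_(r+1)\<close>
  define rank where "rank i = (if r < i then i - Suc r else i + A - Suc r)" for i
  have rank_step: "rank (sigma A i) = Suc (rank i)" if "i < A" "i \<noteq> r" for i
    using that \<open>r < A\<close> by (auto simp: rank_def sigma_eq)
  have rank_r: "rank (sigma A r) = 0" "rank r = A - 1"
    using \<open>r < A\<close> by (auto simp: rank_def sigma_eq)
  let ?R = "\<lambda>a b. rank a \<le> rank b"
  have "realizes ?R (map (\<lambda>i. if i = r then S1 else S0) [0..<A] ! i) i (sigma A i)"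
    if "i < A" for i
  proof (cases "i = r")
    case True
    then show ?thesis using that rank_r \<open>2 \<le> A\<close> by (simp add: realizes_def)
  next
    case False
    then show ?thesis using that rank_step[OF that False] by (simp add: realizes_def)
  qed
  then show ?thesis unfolding weak_order_def by (intro conjI exI[of _ ?R]) auto
qed

lemma weak_order_single_reversal:
  assumes "r < A" "2 \<le> A" "c \<in> {S0, S1}"
  shows "weak_order A (map (\<lambda>i. if i = r then neg c else c) [0..<A])"
proof -
  have descent: "weak_order A (map (\<lambda>i. if i = r then S1 else S0) [0..<A])"
    using weak_order_single_descent assms(1,2) .
  show ?thesis
  proof (cases c)
    case S0
    with descent show ?thesis by (simp only: neg.simps)
  next
    case S1
    have flipped: "map neg (map (\<lambda>i. if i = r then S1 else S0) [0..<A])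
        = map (\<lambda>i. if i = r then neg c else c) [0..<A]"
      using S1 by simp
    from weak_order_map_neg[OF descent] show ?thesis unfolding flipped .
  qed (use assms(3) in simp)
qed

lemma exists_third_below:
  assumes "3 \<le> (A :: nat)"
  shows "\<exists>l<A. l \<noteq> p \<and> l \<noteq> q"
  using assms by presburger

definition antipodal_profile :: "nat \<Rightarrow> nat \<Rightarrow> nat \<Rightarrow> nat \<Rightarrow> sym list \<Rightarrow> sym \<Rightarrow> sym list list" where
  "antipodal_profile A N p q x c =
     map (\<lambda>j. if j = p then x else if j = q then map neg x else replicate N c) [0..<A]"

lemma is_profile_antipodal_profile:
  assumes "p < A" "q < A" "p \<noteq> q" "2 \<le> A"
    and "length x = N" "set x \<subseteq> {S0, S1}" "c \<in> {S0, S1}"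
  shows "is_profile A N (antipodal_profile A N p q x c)"
  unfolding is_profile_def
proof (intro conjI allI impI)
  show "length (antipodal_profile A N p q x c) = A"
    by (simp add: antipodal_profile_def)
  fix j assume "j < A"
  then show "length (antipodal_profile A N p q x c ! j) = N"
    using assms by (simp add: antipodal_profile_def)
next
  fix k assume "k < N"
  then have "x ! k \<in> {S0, S1}" using assms(5,6) nth_mem by blast
  define r where "r = (if x ! k = c then q else p)"
  have "column A (antipodal_profile A N p q x c) k = map (\<lambda>i. if i = r then neg c else c) [0..<A]"
    unfolding column_def
  proof (rule map_cong[OF refl])
    fix i assume "i \<in> set [0..<A]"
    then show "antipodal_profile A N p q x c ! i ! k = (if i = r then neg c else c)"
      using \<open>k < N\<close> \<open>x ! k \<in> {S0, S1}\<close> assms by (auto simp: antipodal_profile_def r_def)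
  qed
  moreover have "r < A" using assms by (simp add: r_def)
  ultimately show "weak_order A (column A (antipodal_profile A N p q x c) k)"
    using weak_order_single_reversal assms(4,7) by simp
qed

locale iia_unanimous_swf =
  fixes A N :: nat
    and w :: "sym list list \<Rightarrow> sym list"
    and s :: "nat \<Rightarrow> sym list \<Rightarrow> sym"
  assumes three_alternatives: "3 \<le> A"
    and IIA: "\<forall>m. is_profile A N m \<longrightarrow> w m = map (\<lambda>j. s j (m ! j)) [0..<A]"
    and unanimity: "\<forall>j<A. \<forall>x\<in>{S0, S1}. s j (replicate N x) = x"
    and unrestricted: "\<forall>m. is_profile A N m \<longrightarrow> weak_order A (w m)"
begin

lemma antipodal_rows_meet_opposite:
  assumes "p < A" "q < A" "p \<noteq> q"
    and "length x = N" "set x \<subseteq> {S0, S1}" "c \<in> {S0, S1}"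
  shows "s p x = neg c \<or> s q (map neg x) = neg c"
proof -
  define m where "m = antipodal_profile A N p q x c"
  have "is_profile A N m"
    unfolding m_def using is_profile_antipodal_profile assms three_alternatives by simp
  then have wm: "w m = map (\<lambda>j. s j (m ! j)) [0..<A]" and "weak_order A (w m)"
    using IIA unrestricted by auto
  have outside: "w m ! j = c" if "j < A" "j \<noteq> p" "j \<noteq> q" for j
    using that unanimity \<open>c \<in> {S0, S1}\<close> unfolding wm by (auto simp: m_def antipodal_profile_def)
  obtain l where "l < A" "l \<noteq> p" "l \<noteq> q"
    using exists_third_below three_alternatives by blast
  then obtain i where "i < A" "w m ! i = neg c"
    using weak_order_opposite_exists \<open>weak_order A (w m)\<close> outside assms(6) by blast
  moreover have "neg c \<noteq> c" using assms(6) by auto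
  ultimately have "i = p \<or> i = q" using outside by metis
  then show ?thesis
    using \<open>i < A\<close> \<open>w m ! i = neg c\<close> assms(1-3) unfolding wm by (auto simp: m_def antipodal_profile_def)
qed

lemma s_map_neg_other:
  assumes "p < A" "q < A" "p \<noteq> q" "length x = N" "set x \<subseteq> {S0, S1}"
  shows "s q (map neg x) = neg (s p x)"
proof -
  have "s p x = S1 \<or> s q (map neg x) = S1" "s p x = S0 \<or> s q (map neg x) = S0"
    using antipodal_rows_meet_opposite[OF assms, of S0] antipodal_rows_meet_opposite[OF assms, of S1]
    by simp_all
  then show ?thesis by (cases "s p x"; cases "s q (map neg x)") auto
qed

lemma s_eq_on_binary:
  assumes "j < A" "k < A" "length x = N" "set x \<subseteq> {S0, S1}"
  shows "s j x = s k x"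
proof -
  obtain l where "l < A" "l \<noteq> j" "l \<noteq> k"
    using exists_third_below three_alternatives by blast
  then have "neg (s j x) = neg (s k x)"
    using s_map_neg_other assms by metis
  then show ?thesis by (metis neg_neg)
qed

lemma s_map_neg:
  assumes "j < A" "length x = N" "set x \<subseteq> {S0, S1}"
  shows "s j (map neg x) = neg (s j x)"
proof -
  obtain l where "l < A" "l \<noteq> j"
    using exists_third_below three_alternatives by blast
  moreover have "set (map neg x) \<subseteq> {S0, S1}" using assms(3) by auto
  ultimately show ?thesis
    using s_map_neg_other s_eq_on_binary assms by (metis length_map)
qed

end

theorem mainTheorem6:
  fixes A N :: nat
    and w :: "sym list list \<Rightarrow> sym list"
    and s :: "nat \<Rightarrow> sym list \<Rightarrow> sym"
  assumes "A \<ge> 3" and "N \<ge> 2"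
    and IIA: "\<forall>m. is_profile A N m \<longrightarrow> w m = map (\<lambda>j. s j (m ! j)) [0..<A]"
    and unanimity: "\<forall>j<A. \<forall>x\<in>{S0, S1}. s j (replicate N x) = x"
    and unrestricted: "\<forall>m. is_profile A N m \<longrightarrow> weak_order A (w m)"
  shows "(\<forall>j<A. \<forall>x. length x = N \<and> set x \<subseteq> {S0, S1} \<longrightarrow> s j (map neg x) = neg (s j x))
       \<and> (\<forall>x. length x = N \<and> set x \<subseteq> {S0, S1} \<longrightarrow> (\<forall>j<A. \<forall>k<A. s j x = s k x))"
proof -
  interpret iia_unanimous_swf A N w s
    using \<open>A \<ge> 3\<close> IIA unanimity unrestricted by unfold_locales
  show ?thesis using s_map_neg s_eq_on_binary by blast
qed

end
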